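(* Let $n\in\{1,2,3\}$, let $\Omega\subset\mathbb{R}^n$ be a bounded domain with smooth boundary, $T>0$, $T_0\in[0,T[$, and let $D\subset\overline\Omega\times[T_0,T]$ be Lebesgue measurable with $\rho$ essentially bounded on $D$. Assume there exist positive numbers $\delta<T-T_0$, $C_1$, $C_2$ and $p\in[0,\infty[$ such that $|D(s)|\ge C_1s^p$ for almost all $s\in[0,\delta]$, where $D(s)=D\cap(\mathbb{R}^n\times\{T_0+s\})$ and $|\cdot|$ is $n$-dimensional Lebesgue measure, and either $\rho\ge C_2$ a.e. on $D\cap(\mathbb{R}^n\times[T_0,T_0+\delta])$ or $-\rho\ge C_2$ a.e. there. Let $\omega\in S^{n-1}$. Then there exist constants $K_1,K_2,K_3,K_4$ with $K_1,K_3>0$ such that, for all sufficiently large $\tau$, $$K_1e^{\sqrt{\tau}K_2}\tau^{-(p+1)}\le e^{\tau T_0}\Big|\int_{D\cap(\mathbb{R}^n\times[T_0,T_0+\delta])}\rho(x,t)e^{\sqrt{\tau}\,x\cdot\omega-\tau t}\,dx\,dt\Big|\le K_3e^{\sqrt{\tau}K_4}.$$ *)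

theory Defs
  imports "HOL-Analysis.Analysis"
begin

fun Ck :: "nat \<Rightarrow> ('a::euclidean_space \<Rightarrow> real) \<Rightarrow> bool" where
  "Ck 0 f = continuous_on UNIV f"
| "Ck (Suc k) f = (f differentiable_on UNIV \<and>
      (\<forall>i\<in>Basis. Ck k (\<lambda>x. frechet_derivative f (at x) i)))"

definition smooth_fun :: "('a::euclidean_space \<Rightarrow> real) \<Rightarrow> bool" where
  "smooth_fun f \<longleftrightarrow> (\<forall>k. Ck k f)"

definition smooth_boundary :: "'a::euclidean_space set \<Rightarrow> bool" where
  "smooth_boundary \<Omega> \<longleftrightarrow> (\<exists>\<phi>. smooth_fun \<phi> \<and> \<Omega> = {x. \<phi> x < 0} \<and>
      (\<forall>x. \<phi> x = 0 \<longrightarrow> frechet_derivative \<phi> (at x) \<noteq> (\<lambda>_. 0)))"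

definition bounded_smooth_domain :: "'a::euclidean_space set \<Rightarrow> bool" where
  "bounded_smooth_domain \<Omega> \<longleftrightarrow> open \<Omega> \<and> connected \<Omega> \<and> \<Omega> \<noteq> {} \<and> bounded \<Omega> \<and> smooth_boundary \<Omega>"

end

theory Submission
  imports Defs
begin

text \<open>
  The weight \<open>exp (sqrt \<tau> * (x \<bullet> \<omega>) - \<tau> * t)\<close> is at most \<open>exp (sqrt \<tau> * R - \<tau> * T0)\<close> on
  \<open>D \<subseteq> cball 0 R \<times> [T0, T]\<close>, which gives the upper bound. For the lower bound, \<open>\<rho>\<close> has a fixed
  sign, so the integral is at least its part over the thin slab \<open>T0 + 1/(2\<tau>) \<le> t \<le> T0 + 1/\<tau>\<close>.
  There the weight is at least \<open>exp (- sqrt \<tau> * R - \<tau> * T0 - 1)\<close>, and by Cavalieri's principle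
  the slab has measure at least \<open>C1 (2\<tau>)\<^sup>-\<^sup>p / (2\<tau>)\<close>, which produces the factor \<open>\<tau> powr (-(p + 1))\<close>.
\<close>

lemma emeasure_lebesgue_ge_of_slices:
  fixes E :: "('a::euclidean_space \<times> real) set"
  assumes E: "E \<in> sets lebesgue" and c: "0 \<le> c" and ab: "a \<le> b"
    and slices: "AE s in lborel. s \<in> {a..b} \<longrightarrow> c \<le> measure lebesgue {x. (x, t0 + s) \<in> E}"
  shows "ennreal (c * (b - a)) \<le> emeasure lebesgue E"
proof -
  obtain S where S: "E \<subseteq> S" "S \<in> sets lborel" "emeasure lebesgue E = emeasure lborel S"
    using completion_upper[of E lborel] E by metis
  \<comment> \<open>The slices of \<open>E\<close> need not be measurable, but those of its Borel hull \<open>S\<close> are.\<close>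
  define slice where "slice t = (\<lambda>x. (x, t)) -` S" for t
  have S_prod: "S \<in> sets (lborel \<Otimes>\<^sub>M lborel)"
    using S(2) lborel_prod[where 'a='a and 'b=real] by (simp only:)
  have slice_ge: "ennreal c \<le> emeasure lborel (slice (t0 + s))"
    if "c \<le> measure lebesgue {x. (x, t0 + s) \<in> E}" for s
  proof -
    have "slice (t0 + s) \<in> sets lborel"
      unfolding slice_def using sets_Pair2[OF S_prod] by simp
    moreover have "{x. (x, t0 + s) \<in> E} \<subseteq> slice (t0 + s)"
      using S(1) by (auto simp: slice_def)
    ultimately have "emeasure lebesgue {x. (x, t0 + s) \<in> E} \<le> emeasure lebesgue (slice (t0 + s))"
      by (intro emeasure_mono) auto
    also have "\<dots> = emeasure lborel (slice (t0 + s))"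
      using \<open>slice (t0 + s) \<in> sets lborel\<close> by simp
    finally have "emeasure lebesgue {x. (x, t0 + s) \<in> E} \<le> emeasure lborel (slice (t0 + s))" .
    moreover have "ennreal (measure lebesgue {x. (x, t0 + s) \<in> E}) \<le> emeasure lebesgue {x. (x, t0 + s) \<in> E}"
      by (simp add: measure_def ennreal_enn2real_if)
    ultimately show ?thesis
      using that by (meson ennreal_leI order_trans)
  qed
  have "ennreal (c * (b - a)) = (\<integral>\<^sup>+s. ennreal c * indicator {a..b} s \<partial>lborel)"
    using ab c by (simp add: nn_integral_cmult_indicator ennreal_mult)
  also have "\<dots> \<le> (\<integral>\<^sup>+s. emeasure lborel (slice (t0 + s)) \<partial>lborel)"
    using slices by (intro nn_integral_mono_AE) (auto elim!: eventually_mono simp: indicator_def slice_ge)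
  also have "\<dots> = (\<integral>\<^sup>+t. emeasure lborel (slice t) \<partial>lborel)"
    using nn_integral_real_affine[OF lborel_pair.measurable_emeasure_Pair2[OF S_prod, unfolded measurable_lborel2], of 1 t0]
    by (simp add: slice_def)
  also have "\<dots> = emeasure (lborel \<Otimes>\<^sub>M lborel) S"
    unfolding slice_def by (rule lborel_pair.emeasure_pair_measure_alt2[OF S_prod, symmetric])
  also have "\<dots> = emeasure lebesgue E"
    using S(3) lborel_prod[where 'a='a and 'b=real] by simp
  finally show ?thesis .
qed

lemma lmeasurable_Int_time_slab:
  fixes E :: "('a::euclidean_space \<times> real) set"
  assumes "E \<in> lmeasurable"
  shows "E \<inter> (UNIV \<times> {a..b}) \<in> lmeasurable"
proof -
  have "UNIV \<times> {a..b} \<in> sets (lebesgue :: ('a \<times> real) measure)"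
    by (intro sets_completionI_sets) (simp add: borel_closed closed_Times)
  then show ?thesis
    using assms by (intro fmeasurableI2[OF assms]) auto
qed

lemma measure_time_slab_ge:
  fixes E :: "('a::euclidean_space \<times> real) set"
  assumes E: "E \<in> lmeasurable" and C1: "0 \<le> C1" and p: "0 \<le> p"
    and ab: "0 \<le> a" "a \<le> b" "b \<le> \<delta>"
    and slices: "AE s in lborel. s \<in> {0..\<delta>} \<longrightarrow> C1 * s powr p \<le> measure lebesgue {x. (x, t0 + s) \<in> E}"
  shows "C1 * a powr p * (b - a) \<le> measure lebesgue (E \<inter> (UNIV \<times> {t0 + a..t0 + b}))"
proof -
  define F where "F = E \<inter> (UNIV \<times> {t0 + a..t0 + b})"
  have F: "F \<in> lmeasurable"
    unfolding F_def using E by (rule lmeasurable_Int_time_slab)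
  have "AE s in lborel. s \<in> {a..b} \<longrightarrow> C1 * a powr p \<le> measure lebesgue {x. (x, t0 + s) \<in> F}"
    using slices
  proof eventually_elim
    case (elim s)
    show ?case
    proof
      assume s: "s \<in> {a..b}"
      have "C1 * a powr p \<le> C1 * s powr p"
        using s ab C1 p by (intro mult_left_mono powr_mono2) auto
      also have "\<dots> \<le> measure lebesgue {x. (x, t0 + s) \<in> F}"
        using elim s ab by (simp add: F_def)
      finally show "C1 * a powr p \<le> measure lebesgue {x. (x, t0 + s) \<in> F}" .
    qed
  qed
  from emeasure_lebesgue_ge_of_slices[OF fmeasurableD[OF F] _ ab(2) this]
  have "ennreal (C1 * a powr p * (b - a)) \<le> emeasure lebesgue F"
    using C1 by simp
  then show ?thesis
    using F by (simp add: emeasure_eq_measure2 F_def[symmetric])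
qed

definition exp_weight :: "real \<Rightarrow> 'a::real_inner \<Rightarrow> 'a \<times> real \<Rightarrow> real" where
  "exp_weight \<tau> \<omega> z = exp (sqrt \<tau> * (fst z \<bullet> \<omega>) - \<tau> * snd z)"

lemma exp_weight_pos: "0 < exp_weight \<tau> \<omega> z"
  by (simp add: exp_weight_def)

lemma borel_measurable_exp_weight:
  "exp_weight \<tau> (\<omega> :: 'a::euclidean_space) \<in> borel_measurable borel"
  unfolding exp_weight_def by (intro borel_measurable_continuous_onI continuous_intros)

lemma exp_weight_le:
  assumes x: "norm (fst z) \<le> R" and t: "t0 \<le> snd z" and \<tau>: "0 \<le> \<tau>" and \<omega>: "norm \<omega> \<le> 1"
  shows "exp_weight \<tau> \<omega> z \<le> exp (sqrt \<tau> * R - \<tau> * t0)"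
proof -
  have "fst z \<bullet> \<omega> \<le> norm (fst z) * norm \<omega>"
    by (rule norm_cauchy_schwarz)
  also have "\<dots> \<le> R"
    using x \<omega> by (meson mult_left_le norm_ge_zero order_trans)
  finally have "sqrt \<tau> * (fst z \<bullet> \<omega>) \<le> sqrt \<tau> * R"
    using \<tau> by (simp add: mult_left_mono)
  moreover have "\<tau> * t0 \<le> \<tau> * snd z"
    using t \<tau> by (simp add: mult_left_mono)
  ultimately show ?thesis
    by (simp add: exp_weight_def)
qed

lemma exp_weight_ge:
  assumes x: "norm (fst z) \<le> R" and t: "snd z \<le> t1" and \<tau>: "0 \<le> \<tau>" and \<omega>: "norm \<omega> \<le> 1"
  shows "exp (- sqrt \<tau> * R - \<tau> * t1) \<le> exp_weight \<tau> \<omega> z"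
proof -
  have "- (fst z \<bullet> \<omega>) \<le> norm (fst z) * norm \<omega>"
    using norm_cauchy_schwarz[of "- fst z" \<omega>] by simp
  also have "\<dots> \<le> R"
    using x \<omega> by (meson mult_left_le norm_ge_zero order_trans)
  finally have "sqrt \<tau> * - (fst z \<bullet> \<omega>) \<le> sqrt \<tau> * R"
    using \<tau> by (intro mult_left_mono) auto
  moreover have "\<tau> * snd z \<le> \<tau> * t1"
    using t \<tau> by (simp add: mult_left_mono)
  ultimately show ?thesis
    by (simp add: exp_weight_def)
qed

lemma AE_lebesgue_on_subset:
  assumes "AE z in lebesgue_on D. P z" "D \<in> sets lebesgue" "E \<in> sets lebesgue" "E \<subseteq> D"
  shows "AE z in lebesgue_on E. P z"
proof -
  have "AE z in lebesgue. z \<in> D \<longrightarrow> P z"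
    using assms(1,2) by (simp add: AE_restrict_space_iff)
  then have "AE z in lebesgue. z \<in> E \<longrightarrow> P z"
    using assms(4) by (auto elim!: eventually_mono)
  then show ?thesis
    using assms(3) by (simp add: AE_restrict_space_iff)
qed

lemma integrable_lebesgue_on_bounded:
  assumes E: "E \<in> lmeasurable" and f: "f \<in> borel_measurable (lebesgue_on E)"
    and bound: "AE z in lebesgue_on E. \<bar>f z\<bar> \<le> B"
  shows "integrable (lebesgue_on E) (f :: _ \<Rightarrow> real)"
proof -
  interpret finite_measure "lebesgue_on E"
    using E by (rule finite_measure_lebesgue_on)
  show ?thesis
    using f bound by (intro integrable_const_bound[where B=B]) auto
qed

lemma abs_integral_lebesgue_on_le:
  assumes E: "E \<in> lmeasurable" and f: "f \<in> borel_measurable (lebesgue_on E)"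
    and bound: "AE z in lebesgue_on E. \<bar>f z\<bar> \<le> B"
  shows "\<bar>LINT z | lebesgue_on E. f z\<bar> \<le> B * measure lebesgue E"
proof -
  have "\<bar>LINT z | lebesgue_on E. f z\<bar> \<le> (LINT z | lebesgue_on E. \<bar>f z\<bar>)"
    by (rule integral_abs_bound)
  also have "\<dots> \<le> (LINT z | lebesgue_on E. B)"
    using E f bound integrable_lebesgue_on_bounded[OF E f bound]
    by (intro integral_mono_AE integrable_lebesgue_on_bounded[where B=B]) auto
  also have "\<dots> = B * measure lebesgue E"
    using E by (simp add: space_restrict_space measure_restrict_space)
  finally show ?thesis .
qed

lemma measure_mult_le_integral_lebesgue_on:
  assumes E: "E \<in> lmeasurable" and F: "F \<in> sets lebesgue" "F \<subseteq> E"
    and f: "integrable (lebesgue_on E) f"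
    and ge: "AE z in lebesgue_on E. 0 \<le> f z \<and> (z \<in> F \<longrightarrow> c \<le> f z)"
  shows "c * measure lebesgue F \<le> (LINT z | lebesgue_on E. f z)"
proof -
  have "F \<inter> E = F"
    using F by blast
  have "integrable (lebesgue_on E) (\<lambda>z. c * indicator F z)"
    using E F by (intro integrable_lebesgue_on_bounded[where B="\<bar>c\<bar>"])
      (auto intro!: measurable_restrict_space1 simp: indicator_def)
  then have "(LINT z | lebesgue_on E. c * indicator F z) \<le> (LINT z | lebesgue_on E. f z)"
    using f ge by (intro integral_mono_AE) (auto elim!: eventually_mono simp: indicator_def)
  moreover have "(LINT z | lebesgue_on E. c * indicator F z) = c * measure lebesgue F"
    using E F \<open>F \<inter> E = F\<close> by (simp add: space_restrict_space measure_restrict_space)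
  ultimately show ?thesis by linarith
qed

lemma borel_measurable_mult_exp_weight:
  fixes \<rho> :: "'a::euclidean_space \<times> real \<Rightarrow> real"
  assumes "\<rho> \<in> borel_measurable (lebesgue_on E)"
  shows "(\<lambda>z. \<rho> z * exp_weight \<tau> \<omega> z) \<in> borel_measurable (lebesgue_on E)"
proof -
  have "exp_weight \<tau> \<omega> \<in> borel_measurable (lebesgue_on E)"
    by (intro measurable_restrict_space1 measurable_completion) (simp add: borel_measurable_exp_weight)
  with assms show ?thesis
    by (rule borel_measurable_times)
qed

lemma AE_abs_mult_exp_weight_le:
  fixes E :: "('a::euclidean_space \<times> real) set"
  assumes E: "E \<subseteq> cball 0 R \<times> {t0..}" and \<rho>: "AE z in lebesgue_on E. \<bar>\<rho> z\<bar> \<le> M"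
    and \<tau>: "0 \<le> \<tau>" and \<omega>: "norm \<omega> \<le> 1"
  shows "AE z in lebesgue_on E. \<bar>\<rho> z * exp_weight \<tau> \<omega> z\<bar> \<le> M * exp (sqrt \<tau> * R - \<tau> * t0)"
  using \<rho> AE_space
proof eventually_elim
  case (elim z)
  then have "norm (fst z) \<le> R" "t0 \<le> snd z"
    using E by (auto simp: space_restrict_space)
  then have "exp_weight \<tau> \<omega> z \<le> exp (sqrt \<tau> * R - \<tau> * t0)"
    using \<tau> \<omega> by (rule exp_weight_le)
  then show ?case
    using elim exp_weight_pos[of \<tau> \<omega> z] by (simp add: abs_mult mult_mono)
qed

lemma integrable_mult_exp_weight:
  fixes E :: "('a::euclidean_space \<times> real) set"
  assumes E: "E \<in> lmeasurable" "E \<subseteq> cball 0 R \<times> {t0..}"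
    and \<rho>: "\<rho> \<in> borel_measurable (lebesgue_on E)" "AE z in lebesgue_on E. \<bar>\<rho> z\<bar> \<le> M"
    and \<tau>: "0 \<le> \<tau>" and \<omega>: "norm \<omega> \<le> 1"
  shows "integrable (lebesgue_on E) (\<lambda>z. \<rho> z * exp_weight \<tau> \<omega> z)"
  using E(1) borel_measurable_mult_exp_weight[OF \<rho>(1)]
    AE_abs_mult_exp_weight_le[OF E(2) \<rho>(2) \<tau> \<omega>]
  by (rule integrable_lebesgue_on_bounded)

lemma abs_integral_mult_exp_weight_le:
  fixes E :: "('a::euclidean_space \<times> real) set"
  assumes E: "E \<in> lmeasurable" "E \<subseteq> cball 0 R \<times> {t0..}"
    and \<rho>: "\<rho> \<in> borel_measurable (lebesgue_on E)" "AE z in lebesgue_on E. \<bar>\<rho> z\<bar> \<le> M"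
    and \<tau>: "0 \<le> \<tau>" and \<omega>: "norm \<omega> \<le> 1"
  shows "exp (\<tau> * t0) * \<bar>LINT z | lebesgue_on E. \<rho> z * exp_weight \<tau> \<omega> z\<bar>
    \<le> M * measure lebesgue E * exp (sqrt \<tau> * R)"
proof -
  have "\<bar>LINT z | lebesgue_on E. \<rho> z * exp_weight \<tau> \<omega> z\<bar>
      \<le> M * exp (sqrt \<tau> * R - \<tau> * t0) * measure lebesgue E"
    using E(1) borel_measurable_mult_exp_weight[OF \<rho>(1)]
      AE_abs_mult_exp_weight_le[OF E(2) \<rho>(2) \<tau> \<omega>]
    by (rule abs_integral_lebesgue_on_le)
  then have "exp (\<tau> * t0) * \<bar>LINT z | lebesgue_on E. \<rho> z * exp_weight \<tau> \<omega> z\<bar>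
      \<le> exp (\<tau> * t0) * (M * exp (sqrt \<tau> * R - \<tau> * t0) * measure lebesgue E)"
    by (rule mult_left_mono) simp
  also have "\<dots> = M * measure lebesgue E * exp (sqrt \<tau> * R)"
    by (simp add: exp_diff)
  finally show ?thesis .
qed

lemma integral_mult_exp_weight_ge_slab:
  fixes E :: "('a::euclidean_space \<times> real) set"
  assumes E: "E \<in> lmeasurable" "E \<subseteq> cball 0 R \<times> {t0..}"
    and \<rho>: "\<rho> \<in> borel_measurable (lebesgue_on E)" "AE z in lebesgue_on E. \<bar>\<rho> z\<bar> \<le> M"
    and \<rho>_ge: "AE z in lebesgue_on E. C2 \<le> \<rho> z"
    and C: "0 \<le> C1" "0 \<le> C2" and p: "0 \<le> p"
    and slices: "AE s in lborel. s \<in> {0..\<delta>} \<longrightarrow> C1 * s powr p \<le> measure lebesgue {x. (x, t0 + s) \<in> E}"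
    and a: "0 \<le> a" "2 * a \<le> \<delta>" and \<tau>: "0 \<le> \<tau>" and \<omega>: "norm \<omega> \<le> 1"
  shows "C2 * exp (- sqrt \<tau> * R - \<tau> * (t0 + 2 * a)) * (C1 * a powr p * a)
    \<le> (LINT z | lebesgue_on E. \<rho> z * exp_weight \<tau> \<omega> z)"
proof -
  define F where "F = E \<inter> (UNIV \<times> {t0 + a..t0 + 2 * a})"
  define c where "c = C2 * exp (- sqrt \<tau> * R - \<tau> * (t0 + 2 * a))"
  have "C1 * a powr p * (2 * a - a) \<le> measure lebesgue F"
    unfolding F_def using a by (intro measure_time_slab_ge[OF E(1) C(1) p _ _ _ slices]) auto
  then have "c * (C1 * a powr p * a) \<le> c * measure lebesgue F"
    using C by (intro mult_left_mono) (simp_all add: c_def)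
  also have "\<dots> \<le> (LINT z | lebesgue_on E. \<rho> z * exp_weight \<tau> \<omega> z)"
  proof (rule measure_mult_le_integral_lebesgue_on[OF E(1) _ _ integrable_mult_exp_weight[OF E \<rho> \<tau> \<omega>]])
    show "F \<in> sets lebesgue" "F \<subseteq> E"
      using lmeasurable_Int_time_slab[OF E(1)] by (auto simp: F_def)
    show "AE z in lebesgue_on E. 0 \<le> \<rho> z * exp_weight \<tau> \<omega> z \<and> (z \<in> F \<longrightarrow> c \<le> \<rho> z * exp_weight \<tau> \<omega> z)"
      using \<rho>_ge AE_space
    proof eventually_elim
      case (elim z)
      have "z \<in> F \<Longrightarrow> exp (- sqrt \<tau> * R - \<tau> * (t0 + 2 * a)) \<le> exp_weight \<tau> \<omega> z"
        using E(2) \<tau> \<omega> by (intro exp_weight_ge) (auto simp: F_def)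
      then show ?case
        using elim C exp_weight_pos[of \<tau> \<omega> z] by (auto simp: c_def intro: mult_mono)
    qed
  qed
  finally show ?thesis
    by (simp only: c_def)
qed

lemma integral_mult_exp_weight_ge:
  fixes E :: "('a::euclidean_space \<times> real) set"
  assumes E: "E \<in> lmeasurable" "E \<subseteq> cball 0 R \<times> {t0..}"
    and \<rho>: "\<rho> \<in> borel_measurable (lebesgue_on E)" "AE z in lebesgue_on E. \<bar>\<rho> z\<bar> \<le> M"
    and \<rho>_ge: "AE z in lebesgue_on E. C2 \<le> \<rho> z"
    and C: "0 \<le> C1" "0 \<le> C2" and p: "0 \<le> p"
    and slices: "AE s in lborel. s \<in> {0..\<delta>} \<longrightarrow> C1 * s powr p \<le> measure lebesgue {x. (x, t0 + s) \<in> E}"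
    and \<tau>: "0 < \<tau>" "1 / \<tau> \<le> \<delta>" and \<omega>: "norm \<omega> \<le> 1"
  shows "C1 * C2 * exp (-1) * (1/2) powr (p + 1) * exp (- sqrt \<tau> * R) * \<tau> powr (-(p + 1))
    \<le> exp (\<tau> * t0) * (LINT z | lebesgue_on E. \<rho> z * exp_weight \<tau> \<omega> z)"
proof -
  define a where "a = 1 / (2 * \<tau>)"
  have a: "0 \<le> a" "2 * a \<le> \<delta>"
    using \<tau> by (auto simp: a_def)
  have exp_a: "exp (\<tau> * t0) * exp (- sqrt \<tau> * R - \<tau> * (t0 + 2 * a)) = exp (-1) * exp (- sqrt \<tau> * R)"
    using \<tau> by (simp add: a_def algebra_simps flip: exp_add)
  have "a powr p * a = a powr (p + 1)"
    using a by (simp add: powr_add)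
  also have "\<dots> = (1/2 * inverse \<tau>) powr (p + 1)"
    by (simp add: a_def field_simps)
  also have "\<dots> = (1/2) powr (p + 1) * \<tau> powr (-(p + 1))"
    by (simp only: powr_mult inverse_powr powr_minus)
  finally have powr_a: "a powr p * a = (1/2) powr (p + 1) * \<tau> powr (-(p + 1))" .
  have "exp (\<tau> * t0) * (C2 * exp (- sqrt \<tau> * R - \<tau> * (t0 + 2 * a)) * (C1 * a powr p * a))
      = C1 * C2 * (exp (\<tau> * t0) * exp (- sqrt \<tau> * R - \<tau> * (t0 + 2 * a))) * (a powr p * a)"
    by (simp only: mult_ac)
  also have "\<dots> = C1 * C2 * exp (-1) * (1/2) powr (p + 1) * exp (- sqrt \<tau> * R) * \<tau> powr (-(p + 1))"
    unfolding exp_a powr_a by (simp only: mult_ac)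
  finally have weight_constant: "exp (\<tau> * t0) * (C2 * exp (- sqrt \<tau> * R - \<tau> * (t0 + 2 * a)) * (C1 * a powr p * a))
      = C1 * C2 * exp (-1) * (1/2) powr (p + 1) * exp (- sqrt \<tau> * R) * \<tau> powr (-(p + 1))" .
  have "exp (\<tau> * t0) * (C2 * exp (- sqrt \<tau> * R - \<tau> * (t0 + 2 * a)) * (C1 * a powr p * a))
      \<le> exp (\<tau> * t0) * (LINT z | lebesgue_on E. \<rho> z * exp_weight \<tau> \<omega> z)"
    using \<tau> by (intro mult_left_mono integral_mult_exp_weight_ge_slab[OF E \<rho> \<rho>_ge C p slices a _ \<omega>]) auto
  with weight_constant show ?thesis
    by (simp only:)
qed

lemma abs_integral_mult_exp_weight_ge:
  fixes E :: "('a::euclidean_space \<times> real) set"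
  assumes E: "E \<in> lmeasurable" "E \<subseteq> cball 0 R \<times> {t0..}"
    and \<rho>: "\<rho> \<in> borel_measurable (lebesgue_on E)" "AE z in lebesgue_on E. \<bar>\<rho> z\<bar> \<le> M"
    and sign: "(AE z in lebesgue_on E. C2 \<le> \<rho> z) \<or> (AE z in lebesgue_on E. C2 \<le> - \<rho> z)"
    and C: "0 \<le> C1" "0 \<le> C2" and p: "0 \<le> p"
    and slices: "AE s in lborel. s \<in> {0..\<delta>} \<longrightarrow> C1 * s powr p \<le> measure lebesgue {x. (x, t0 + s) \<in> E}"
    and \<tau>: "0 < \<tau>" "1 / \<tau> \<le> \<delta>" and \<omega>: "norm \<omega> \<le> 1"
  shows "C1 * C2 * exp (-1) * (1/2) powr (p + 1) * exp (- sqrt \<tau> * R) * \<tau> powr (-(p + 1))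
    \<le> exp (\<tau> * t0) * \<bar>LINT z | lebesgue_on E. \<rho> z * exp_weight \<tau> \<omega> z\<bar>"
  using sign
proof
  assume "AE z in lebesgue_on E. C2 \<le> \<rho> z"
  from integral_mult_exp_weight_ge[OF E \<rho> this C p slices \<tau> \<omega>]
  show ?thesis
    by (rule order_trans) (simp add: mult_left_mono)
next
  assume "AE z in lebesgue_on E. C2 \<le> - \<rho> z"
  moreover have "(\<lambda>z. - \<rho> z) \<in> borel_measurable (lebesgue_on E)" "AE z in lebesgue_on E. \<bar>- \<rho> z\<bar> \<le> M"
    using \<rho> by simp_all
  ultimately have "C1 * C2 * exp (-1) * (1/2) powr (p + 1) * exp (- sqrt \<tau> * R) * \<tau> powr (-(p + 1))
      \<le> exp (\<tau> * t0) * (LINT z | lebesgue_on E. - \<rho> z * exp_weight \<tau> \<omega> z)"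
    using integral_mult_exp_weight_ge[OF E _ _ _ C p slices \<tau> \<omega>] by blast
  also have "\<dots> = exp (\<tau> * t0) * - (LINT z | lebesgue_on E. \<rho> z * exp_weight \<tau> \<omega> z)"
    by simp
  also have "\<dots> \<le> exp (\<tau> * t0) * \<bar>LINT z | lebesgue_on E. \<rho> z * exp_weight \<tau> \<omega> z\<bar>"
    by (intro mult_left_mono) auto
  finally show ?thesis .
qed

lemma integral_mult_exp_weight_bounds:
  fixes E :: "('a::euclidean_space \<times> real) set"
  assumes E: "E \<in> lmeasurable" "E \<subseteq> cball 0 R \<times> {t0..}"
    and \<rho>: "\<rho> \<in> borel_measurable (lebesgue_on E)" "AE z in lebesgue_on E. \<bar>\<rho> z\<bar> \<le> M"
    and sign: "(AE z in lebesgue_on E. C2 \<le> \<rho> z) \<or> (AE z in lebesgue_on E. C2 \<le> - \<rho> z)"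
    and C: "0 < C1" "0 < C2" and p: "0 \<le> p" and \<delta>: "0 < \<delta>"
    and slices: "AE s in lborel. s \<in> {0..\<delta>} \<longrightarrow> C1 * s powr p \<le> measure lebesgue {x. (x, t0 + s) \<in> E}"
    and \<omega>: "norm \<omega> \<le> 1"
  shows "\<exists>K1 K2 K3 K4. K1 > 0 \<and> K3 > 0 \<and>
    (\<forall>\<^sub>F \<tau> in at_top.
      K1 * exp (sqrt \<tau> * K2) * \<tau> powr (-(p + 1))
        \<le> exp (\<tau> * t0) * \<bar>LINT z | lebesgue_on E. \<rho> z * exp_weight \<tau> \<omega> z\<bar> \<and>
      exp (\<tau> * t0) * \<bar>LINT z | lebesgue_on E. \<rho> z * exp_weight \<tau> \<omega> z\<bar>
        \<le> K3 * exp (sqrt \<tau> * K4))"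
proof (intro exI conjI)
  define K1 where "K1 = C1 * C2 * exp (-1) * (1/2) powr (p + 1)"
  define K3 where "K3 = \<bar>M\<bar> * measure lebesgue E + 1"
  show "K1 > 0" "K3 > 0"
    using C by (simp_all add: K1_def K3_def add_nonneg_pos)
  show "\<forall>\<^sub>F \<tau> in at_top.
      K1 * exp (sqrt \<tau> * - R) * \<tau> powr (-(p + 1))
        \<le> exp (\<tau> * t0) * \<bar>LINT z | lebesgue_on E. \<rho> z * exp_weight \<tau> \<omega> z\<bar> \<and>
      exp (\<tau> * t0) * \<bar>LINT z | lebesgue_on E. \<rho> z * exp_weight \<tau> \<omega> z\<bar>
        \<le> K3 * exp (sqrt \<tau> * R)"
    using eventually_ge_at_top[of "max 1 (1 / \<delta>)"]
  proof eventually_elim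
    case (elim \<tau>)
    then have \<tau>: "0 < \<tau>" "1 / \<tau> \<le> \<delta>"
      using \<delta> by (auto simp: field_simps)
    have "K1 * exp (sqrt \<tau> * - R) * \<tau> powr (-(p + 1))
        \<le> exp (\<tau> * t0) * \<bar>LINT z | lebesgue_on E. \<rho> z * exp_weight \<tau> \<omega> z\<bar>"
      using abs_integral_mult_exp_weight_ge[OF E \<rho> sign _ _ p slices \<tau> \<omega>] C
      by (simp add: K1_def)
    moreover have "exp (\<tau> * t0) * \<bar>LINT z | lebesgue_on E. \<rho> z * exp_weight \<tau> \<omega> z\<bar>
        \<le> M * measure lebesgue E * exp (sqrt \<tau> * R)"
      using \<tau> by (intro abs_integral_mult_exp_weight_le[OF E \<rho> _ \<omega>]) simp
    moreover have "M * measure lebesgue E * exp (sqrt \<tau> * R) \<le> K3 * exp (sqrt \<tau> * R)"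
    proof (rule mult_right_mono)
      show "M * measure lebesgue E \<le> K3"
        using mult_right_mono[OF abs_ge_self[of M] measure_nonneg[of lebesgue E]] by (simp add: K3_def)
    qed simp
    ultimately show ?case
      by linarith
  qed
qed

theorem lemma3p1:
  fixes \<Omega> :: "(real ^ 'n) set"
    and D :: "((real ^ 'n) \<times> real) set"
    and \<rho> :: "(real ^ 'n) \<times> real \<Rightarrow> real"
    and T T0 \<delta> C1 C2 p :: real
    and \<omega> :: "real ^ 'n"
  assumes dim: "CARD('n) \<in> {1, 2, 3}"
    and dom: "bounded_smooth_domain \<Omega>"
    and T: "T > 0" and T0: "0 \<le> T0" "T0 < T"
    and Dsub: "D \<subseteq> closure \<Omega> \<times> {T0..T}"
    and Dmeas: "D \<in> sets lebesgue"
    and rho_meas: "\<rho> \<in> borel_measurable (lebesgue_on D)"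
    and rho_bdd: "\<exists>M. AE z in lebesgue_on D. \<bar>\<rho> z\<bar> \<le> M"
    and delta: "0 < \<delta>" "\<delta> < T - T0"
    and C: "0 < C1" "0 < C2"
    and p: "0 \<le> p"
    and slices: "AE s in lebesgue_on {0..\<delta>}.
                   measure lebesgue {x. (x, T0 + s) \<in> D} \<ge> C1 * s powr p"
    and sign: "(AE z in lebesgue_on (D \<inter> (UNIV \<times> {T0..T0+\<delta>})). \<rho> z \<ge> C2) \<or>
               (AE z in lebesgue_on (D \<inter> (UNIV \<times> {T0..T0+\<delta>})). - \<rho> z \<ge> C2)"
    and omega: "norm \<omega> = 1"
  shows "\<exists>K1 K2 K3 K4. K1 > 0 \<and> K3 > 0 \<and>
    (\<forall>\<^sub>F \<tau> in at_top.
      K1 * exp (sqrt \<tau> * K2) * \<tau> powr (-(p + 1))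
        \<le> exp (\<tau> * T0) * \<bar>LINT z | lebesgue_on (D \<inter> (UNIV \<times> {T0..T0+\<delta>})).
               \<rho> z * exp (sqrt \<tau> * (fst z \<bullet> \<omega>) - \<tau> * snd z)\<bar> \<and>
      exp (\<tau> * T0) * \<bar>LINT z | lebesgue_on (D \<inter> (UNIV \<times> {T0..T0+\<delta>})).
               \<rho> z * exp (sqrt \<tau> * (fst z \<bullet> \<omega>) - \<tau> * snd z)\<bar>
        \<le> K3 * exp (sqrt \<tau> * K4))"
proof -
  define E where "E = D \<inter> (UNIV \<times> {T0..T0+\<delta>})"
  have "bounded (closure \<Omega>)"
    using dom by (simp add: bounded_smooth_domain_def bounded_closure)
  then obtain R where "closure \<Omega> \<subseteq> ball 0 R"
    using bounded_subset_ballD by blast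
  then have D_sub: "D \<subseteq> cball 0 R \<times> {T0..T}"
    using Dsub ball_subset_cball by blast
  moreover have "bounded (cball (0 :: real ^ 'n) R \<times> {T0..T})"
    by (simp add: bounded_Times)
  ultimately have "D \<in> lmeasurable"
    using Dmeas bounded_subset bounded_set_imp_lmeasurable by blast
  then have E: "E \<in> lmeasurable" "E \<subseteq> cball 0 R \<times> {T0..}"
    using D_sub by (auto simp: E_def intro: lmeasurable_Int_time_slab)
  obtain M where "AE z in lebesgue_on D. \<bar>\<rho> z\<bar> \<le> M"
    using rho_bdd by blast
  then have M_E: "AE z in lebesgue_on E. \<bar>\<rho> z\<bar> \<le> M"
    using Dmeas fmeasurableD[OF E(1)] by (rule AE_lebesgue_on_subset) (simp add: E_def)
  have \<rho>_E: "\<rho> \<in> borel_measurable (lebesgue_on E)"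
    by (rule measurable_restrict_mono[OF rho_meas]) (auto simp: E_def)
  have "AE s in lborel. s \<in> {0..\<delta>} \<longrightarrow> C1 * s powr p \<le> measure lebesgue {x. (x, T0 + s) \<in> D}"
    using slices by (simp add: AE_restrict_space_iff AE_completion_iff)
  then have slices_E: "AE s in lborel. s \<in> {0..\<delta>} \<longrightarrow> C1 * s powr p \<le> measure lebesgue {x. (x, T0 + s) \<in> E}"
    by (auto simp: E_def elim!: eventually_mono)
  show ?thesis
    using integral_mult_exp_weight_bounds[OF E \<rho>_E M_E sign[folded E_def] C p delta(1) slices_E
        omega[THEN eq_refl]]
    unfolding E_def exp_weight_def .
qed

end
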